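(* Assume Assumptions A.1–A.6. Suppose $q:\Theta\to\mathbb{R}$ is bounded on $\Theta$ and continuous on $\Theta_{\#\#}$. Then for each $t\ge1$, the function $\theta\mapsto E(q(\theta_t^* )\mid\theta_0^*=\theta)$ is continuous on $\Theta_{\#\#}$.
   Context: Model: $\xi_t=a(X_{t-1})+b(X_{t-1})e_t$ with $X_t=(\xi_t,\dots,\xi_{t-p+1})\in\mathbb{R}^p$, $\{e_t\}$ i.i.d. $\|\cdot\|$ Euclidean, $\Theta=\{\theta:\|\theta\|=1\}$, $\mathbb{R}^p_0=\mathbb{R}^p\setminus\{0\}$, $H_0=\{x:\min_i|x_i|=0\}$, $\Theta_\#=\Theta\setminus H_0$. A.1: $e_t$ has Lebesgue density $f$ locally bounded away from $0$; $b$ positive, locally bounded, locally bounded away from $0$. A.2: $\sup_u(1+|u|)f(u)<\infty$, $E|e_1|^{r_0}<\infty$ for some $r_0>0$. A.3: $a(x)/(1+\|x\|)$, $b(x)/(1+\|x\|)$ bounded. A.4: bounded $a_*,b_*$ on $\Theta$ with $\sup_{\theta}|a(w\theta)/w-a_*(\theta)|\to0$, $\sup_\theta|b(w\theta)/w-b_*(\theta)|\to0$ as $w\to\infty$; $a^*(x)=a_*(x/\|x\|)\|x\|$, $b^*(x)=b_*(x/\|x\|)\|x\|$, $a^*(0)=b^*(0)=0$. A.5: if $p>1$, $\max(|a^*|,b^* )$ locally bounded away from $0$ on $\mathbb{R}^p_0$ and $b^*$ locally bounded away from $0$ on $\mathbb{R}^p\setminus H_0$. A.6: if $p>1$, there are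 $(p-1)$-dimensional hyperplanes $H_1,\dots,H_m$ through the origin with $a^*,b^*$ continuous off $\bigcup_jH_j$. $F\theta=(\theta_2,\dots,\theta_p,\theta_1)$; $\Theta_{\#\#}=\{\theta\in\Theta_\#:F^k\theta\notin H_j\ \forall j,k\}$. $z(x,u)=a^*(x)+b^*(x)u$, $w(x,u)=\|(z(x,u),x_1,\dots,x_{p-1})\|$; collapsed chain $\theta_t^*=(z(\theta^*_{t-1},e_t),\theta^*_{t-1,1},\dots,\theta^*_{t-1,p-1})/w(\theta^*_{t-1},e_t)$. *)

theory Defs
  imports "HOL-Probability.Probability"
begin

text \<open>Vectors in R^p are represented as real^'p with 'p a finite linearly ordered
index type; the coordinate at position k (0-based) in the order of 'p plays the
role of the (k+1)-th coordinate x_(k+1).\<close>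

definition pos :: "('p::{finite,linorder}) \<Rightarrow> nat" where
  "pos i = card {j. j < i}"

definition idx :: "nat \<Rightarrow> ('p::{finite,linorder})" where
  "idx k = (THE i. pos i = k)"

definition prepend :: "real \<Rightarrow> real^('p::{finite,linorder}) \<Rightarrow> real^('p::{finite,linorder})" where
  "prepend z x = (\<chi> i. if pos i = 0 then z else x $ idx (pos i - 1))"

definition cshift :: "real^('p::{finite,linorder}) \<Rightarrow> real^('p::{finite,linorder})" where
  "cshift x = (\<chi> i. x $ idx ((pos i + 1) mod CARD('p)))"

definition H0 :: "(real^('p::{finite,linorder})) set" where
  "H0 = {x. \<exists>i. x $ i = 0}"

definition Theta_sharp :: "(real^('p::{finite,linorder})) set" where
  "Theta_sharp = sphere 0 1 - H0"

text \<open>Theta_## for hyperplanes H_j = {x. n_j \<bullet> x = 0}, n_j \<in> N\<close>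
definition Theta_ss :: "(real^('p::{finite,linorder})) set \<Rightarrow> (real^('p::{finite,linorder})) set" where
  "Theta_ss N = {\<theta> \<in> Theta_sharp. \<forall>n\<in>N. \<forall>k. n \<bullet> ((cshift ^^ k) \<theta>) \<noteq> 0}"

text \<open>g^*(x) = g_*(x/|x|) |x|  (equals 0 at x = 0)\<close>
definition star :: "('a::real_normed_vector \<Rightarrow> real) \<Rightarrow> 'a \<Rightarrow> real" where
  "star g x = g (x /\<^sub>R norm x) * norm x"

definition zfun :: "(real^('p::{finite,linorder}) \<Rightarrow> real) \<Rightarrow> (real^('p::{finite,linorder}) \<Rightarrow> real) \<Rightarrow> real^('p::{finite,linorder}) \<Rightarrow> real \<Rightarrow> real" where
  "zfun as bs x u = star as x + star bs x * u"

definition wfun :: "(real^('p::{finite,linorder}) \<Rightarrow> real) \<Rightarrow> (real^('p::{finite,linorder}) \<Rightarrow> real) \<Rightarrow> real^('p::{finite,linorder}) \<Rightarrow> real \<Rightarrow> real" where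
  "wfun as bs x u = norm (prepend (zfun as bs x u) x)"

definition cstep :: "(real^('p::{finite,linorder}) \<Rightarrow> real) \<Rightarrow> (real^('p::{finite,linorder}) \<Rightarrow> real) \<Rightarrow> real^('p::{finite,linorder}) \<Rightarrow> real \<Rightarrow> real^('p::{finite,linorder})" where
  "cstep as bs x u = (1 / wfun as bs x u) *\<^sub>R prepend (zfun as bs x u) x"

text \<open>theta*_n as a function of theta*_0 = theta and the innovations e_1, e_2, ...\<close>
fun cchain :: "(real^('p::{finite,linorder}) \<Rightarrow> real) \<Rightarrow> (real^('p::{finite,linorder}) \<Rightarrow> real) \<Rightarrow> real^('p::{finite,linorder}) \<Rightarrow> (nat \<Rightarrow> real) \<Rightarrow> nat \<Rightarrow> real^('p::{finite,linorder})" where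
  "cchain as bs \<theta> e 0 = \<theta>"
| "cchain as bs \<theta> e (Suc n) = cstep as bs (cchain as bs \<theta> e n) (e (Suc n))"

definition loc_bdd :: "('a::metric_space \<Rightarrow> real) \<Rightarrow> bool" where
  "loc_bdd g \<longleftrightarrow> (\<forall>x. \<exists>e>0. \<exists>M. \<forall>y\<in>ball x e. \<bar>g y\<bar> \<le> M)"

definition loc_bdd_away0 :: "'a::metric_space set \<Rightarrow> ('a \<Rightarrow> real) \<Rightarrow> bool" where
  "loc_bdd_away0 S g \<longleftrightarrow> (\<forall>x\<in>S. \<exists>e>0. \<exists>c>0. \<forall>y\<in>S \<inter> ball x e. c \<le> \<bar>g y\<bar>)"

end

theory Submission
  imports Defs
begin

(* For p = 1 the set Theta_## is finite. For p > 1, one step of the collapsed chain sends s to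
   the normalisation of (z, s_1, ..., s_(p-1)) with z = a^*(s) + b^*(s) u. For s in Theta_##,
   every condition defining Theta_## is affine in z and does not fail identically, so it fails
   for at most one z; as b^*(s) <> 0 by A.5, the chain leaves Theta_## only for countably many
   innovations u, a Lebesgue null set. By Fubini, the path theta_0^*, ..., theta_t^* then stays
   in Theta_## almost surely. There a^* and b^* are continuous (A.6), so theta_t^* depends
   continuously on theta_0^* almost surely, and dominated convergence with the bound on q
   gives continuity of the expectation. *)

section \<open>Coordinates and the cyclic shift\<close>

lemma pos_less_card: "pos (i::'p::{finite,linorder}) < CARD('p)"
proof -
  have "{j. j < i} \<subset> UNIV" by auto
  then show ?thesis unfolding pos_def by (simp add: psubset_card_mono)
qed

lemma strict_mono_pos: "strict_mono (pos :: 'p::{finite,linorder} \<Rightarrow> nat)"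
proof
  fix i j :: 'p
  assume "i < j"
  then have "{k. k < i} \<subset> {k. k < j}" by auto
  then show "pos i < pos j" unfolding pos_def by (simp add: psubset_card_mono)
qed

lemma inj_pos: "inj (pos :: 'p::{finite,linorder} \<Rightarrow> nat)"
  by (rule strict_mono_imp_inj_on[OF strict_mono_pos])

lemma range_pos: "range (pos :: 'p::{finite,linorder} \<Rightarrow> nat) = {..<CARD('p)}"
proof -
  have "range (pos :: 'p \<Rightarrow> nat) \<subseteq> {..<CARD('p)}" using pos_less_card by auto
  moreover have "card (range (pos :: 'p \<Rightarrow> nat)) = card {..<CARD('p)}"
    using card_image[OF inj_pos] by simp
  ultimately show ?thesis by (simp add: card_subset_eq)
qed

lemma pos_idx: "k < CARD('p::{finite,linorder}) \<Longrightarrow> pos (idx k :: 'p) = k"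
proof -
  assume "k < CARD('p)"
  then obtain i :: 'p where "pos i = k" using range_pos[where 'p='p] by (metis imageE lessThan_iff)
  then have "\<exists>!i::'p. pos i = k" using inj_pos by (auto dest: injD)
  then show ?thesis unfolding idx_def by (rule theI')
qed

lemma idx_pos: "idx (pos (i::'p::{finite,linorder})) = i"
  using pos_idx[OF pos_less_card[of i]] inj_pos by (auto dest: injD)

lemma cshift_pow_nth:
  "(cshift ^^ k) x $ i = x $ idx ((pos (i::'p::{finite,linorder}) + k) mod CARD('p))"
proof (induction k arbitrary: i)
  case 0
  then show ?case by (simp add: pos_less_card idx_pos)
next
  case (Suc k)
  have "(cshift ^^ Suc k) x $ i = (cshift ^^ k) x $ idx ((pos i + 1) mod CARD('p))"
    by (simp add: cshift_def)
  also have "\<dots> = x $ idx (((pos i + 1) mod CARD('p) + k) mod CARD('p))"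
    using Suc.IH by (simp add: pos_idx)
  also have "((pos i + 1) mod CARD('p) + k) mod CARD('p) = (pos i + Suc k) mod CARD('p)"
    by (simp add: mod_add_left_eq)
  finally show ?case .
qed

lemma cshift_pow_card: "(cshift ^^ CARD('p)) (x::real^'p::{finite,linorder}) = x"
  by (simp add: vec_eq_iff cshift_pow_nth pos_less_card idx_pos)

lemma cshift_pow_add:
  "(cshift ^^ k) (x + y) = (cshift ^^ k) x + (cshift ^^ k) (y::real^'p::{finite,linorder})"
  by (simp add: vec_eq_iff cshift_pow_nth)

lemma cshift_pow_scaleR: "(cshift ^^ k) (c *\<^sub>R x) = c *\<^sub>R (cshift ^^ k) (x::real^'p::{finite,linorder})"
  by (simp add: vec_eq_iff cshift_pow_nth)

lemma cshift_prepend_last: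
  fixes s :: "real^'p::{finite,linorder}"
  shows "cshift (prepend (s $ idx (CARD('p) - 1)) s) = s"
proof (subst vec_eq_iff, intro allI)
  fix i :: 'p
  show "cshift (prepend (s $ idx (CARD('p) - 1)) s) $ i = s $ i"
  proof (cases "pos i = CARD('p) - 1")
    case True
    then have "i = idx (CARD('p) - 1)" using idx_pos by metis
    with True show ?thesis by (simp add: cshift_def prepend_def pos_idx)
  next
    case False
    then have "pos i + 1 < CARD('p)" using pos_less_card[of i] by linarith
    then show ?thesis by (simp add: cshift_def prepend_def pos_idx idx_pos)
  qed
qed

lemma prepend_eq_add_axis:
  "prepend z s = prepend 0 s + z *\<^sub>R axis (idx 0 :: 'p::{finite,linorder}) 1"
proof (subst vec_eq_iff, intro allI)
  fix i :: 'p
  have "pos i = 0 \<longleftrightarrow> i = idx 0"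
  proof
    show "pos i = 0 \<Longrightarrow> i = idx 0" using idx_pos[of i] by simp
    show "i = idx 0 \<Longrightarrow> pos i = 0" by (simp add: pos_idx)
  qed
  then show "prepend z s $ i = (prepend 0 s + z *\<^sub>R axis (idx 0) 1) $ i"
    by (simp add: prepend_def axis_def)
qed

section \<open>Leaving Theta_## is a null event\<close>

lemma mem_Theta_ss_iff:
  "x \<in> Theta_ss N \<longleftrightarrow> norm x = 1 \<and> (\<forall>i. x $ i \<noteq> 0) \<and> (\<forall>n\<in>N. \<forall>k. n \<bullet> (cshift ^^ k) x \<noteq> 0)"
  by (auto simp: Theta_ss_def Theta_sharp_def H0_def)

lemma countable_zeros_affine:
  fixes \<alpha> \<beta> :: real
  assumes "\<alpha> \<noteq> 0 \<or> \<beta> \<noteq> 0"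
  shows "countable {z. \<alpha> + z * \<beta> = 0}"
proof (cases "\<beta> = 0")
  case True
  then have "{z. \<alpha> + z * \<beta> = 0} = {}" using assms by auto
  then show ?thesis by simp
next
  case False
  then have "{z. \<alpha> + z * \<beta> = 0} = {- \<alpha> / \<beta>}" by (auto simp: field_simps)
  then show ?thesis by simp
qed

(* At z = s_p the vector prepend z s is mapped to s by the cyclic shift, so the affine
   function of z below does not vanish there. *)
lemma countable_prepend_zeros:
  fixes s :: "real^'p::{finite,linorder}"
  assumes s: "s \<in> Theta_ss N" and n: "n \<in> N"
  shows "countable {z. n \<bullet> (cshift ^^ k) (prepend z s) = 0}"
proof -
  define \<alpha> where "\<alpha> = n \<bullet> (cshift ^^ k) (prepend 0 s)"
  define \<beta> where "\<beta> = n \<bullet> (cshift ^^ k) (axis (idx 0 :: 'p) 1)"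
  have affine: "n \<bullet> (cshift ^^ k) (prepend z s) = \<alpha> + z * \<beta>" for z
    by (subst prepend_eq_add_axis) (simp add: \<alpha>_def \<beta>_def cshift_pow_add cshift_pow_scaleR inner_add_right)
  let ?l = "s $ idx (CARD('p) - 1)"
  have "(cshift ^^ (k + (CARD('p) - 1))) s = (cshift ^^ Suc (k + (CARD('p) - 1))) (prepend ?l s)"
    by (simp only: funpow_Suc_right comp_def cshift_prepend_last)
  also have "Suc (k + (CARD('p) - 1)) = k + CARD('p)" by simp
  also have "(cshift ^^ (k + CARD('p))) (prepend ?l s) = (cshift ^^ k) (prepend ?l s)"
    by (simp only: funpow_add comp_def cshift_pow_card)
  finally have "\<alpha> + ?l * \<beta> \<noteq> 0"
    using s n affine[of ?l] unfolding mem_Theta_ss_iff by metis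
  then have "\<alpha> \<noteq> 0 \<or> \<beta> \<noteq> 0" by auto
  then show ?thesis unfolding affine by (rule countable_zeros_affine)
qed

lemma prepend_nonzero:
  fixes s :: "real^'p::{finite,linorder}"
  assumes "CARD('p) > 1" and "\<forall>i. s $ i \<noteq> 0"
  shows "prepend z s \<noteq> 0"
proof -
  have "prepend z s $ idx 1 = s $ idx 0" using assms(1) by (simp add: prepend_def pos_idx)
  with assms(2) show ?thesis by auto
qed

lemma cstep_eq: "cstep as bs s u = prepend (zfun as bs s u) s /\<^sub>R norm (prepend (zfun as bs s u) s)"
  by (simp add: cstep_def wfun_def divide_inverse)

lemma normalized_prepend_in_Theta_ss:
  fixes s :: "real^'p::{finite,linorder}"
  assumes p: "CARD('p) > 1" and s: "s \<in> Theta_ss N" and z: "z \<noteq> 0"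
    and hyp: "\<forall>n\<in>N. \<forall>k. n \<bullet> (cshift ^^ k) (prepend z s) \<noteq> 0"
  shows "prepend z s /\<^sub>R norm (prepend z s) \<in> Theta_ss N"
proof -
  have coords: "\<forall>i. s $ i \<noteq> 0" using s unfolding mem_Theta_ss_iff by blast
  then have "norm (prepend z s) > 0" using prepend_nonzero[OF p] by simp
  moreover have "prepend z s $ i \<noteq> 0" for i using z coords by (simp add: prepend_def)
  ultimately show ?thesis
    using hyp by (simp add: mem_Theta_ss_iff cshift_pow_scaleR)
qed

lemma countable_cstep_exits:
  fixes s :: "real^'p::{finite,linorder}"
  assumes p: "CARD('p) > 1" and s: "s \<in> Theta_ss N" and b: "star bs s \<noteq> 0" and N: "finite N"
  shows "countable {u. cstep as bs s u \<notin> Theta_ss N}"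
proof -
  define Z where "Z = insert 0 (\<Union>n\<in>N. \<Union>k. {z. n \<bullet> (cshift ^^ k) (prepend z s) = 0})"
  have "countable Z"
    unfolding Z_def using countable_prepend_zeros[OF s] N by (auto intro: countable_finite)
  moreover have "{u. cstep as bs s u \<notin> Theta_ss N} \<subseteq> (\<lambda>z. (z - star as s) / star bs s) ` Z"
  proof
    fix u assume "u \<in> {u. cstep as bs s u \<notin> Theta_ss N}"
    then have "zfun as bs s u \<in> Z"
      using normalized_prepend_in_Theta_ss[OF p s] unfolding Z_def cstep_eq by blast
    moreover have "u = (zfun as bs s u - star as s) / star bs s" using b by (simp add: zfun_def)
    ultimately show "u \<in> (\<lambda>z. (z - star as s) / star bs s) ` Z" by blast
  qed
  ultimately show ?thesis by (meson countable_image countable_subset)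
qed

lemma AE_cstep_in_Theta_ss:
  fixes s :: "real^'p::{finite,linorder}"
  assumes "CARD('p) > 1" and "s \<in> Theta_ss N" and "star bs s \<noteq> 0" and "finite N"
    and g: "g \<in> borel_measurable lborel"
  shows "AE u in density lborel g. cstep as bs s u \<in> Theta_ss N"
proof -
  have "AE u in lborel. u \<notin> {u. cstep as bs s u \<notin> Theta_ss N}"
    by (intro AE_not_in countable_imp_null_set_lborel countable_cstep_exits assms)
  then show ?thesis by (simp add: AE_density[OF g] eventually_mono)
qed

section \<open>Measurability\<close>

lemma continuous_on_prepend:
  "continuous_on UNIV (\<lambda>x. prepend (fst x) (snd x :: real^'p::{finite,linorder}))"
  unfolding prepend_def
proof (intro continuous_on_vec_lambda)
  fix i :: 'p
  show "continuous_on UNIV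
      (\<lambda>x::real \<times> (real^('p::{finite,linorder})). if pos i = 0 then fst x else snd x $ idx (pos i - 1))"
    by (cases "pos i = 0") (simp_all add: continuous_on_fst continuous_on_snd continuous_on_component)
qed

lemma borel_measurable_star:
  fixes a as :: "'a::euclidean_space \<Rightarrow> real"
  assumes a: "a \<in> borel_measurable borel"
    and lim: "\<forall>\<epsilon>>0. \<exists>W. \<forall>w\<ge>W. \<forall>\<theta>\<in>sphere 0 1. \<bar>a (w *\<^sub>R \<theta>) / w - as \<theta>\<bar> < \<epsilon>"
  shows "star as \<in> borel_measurable borel"
proof (rule borel_measurable_LIMSEQ_real)
  have radial_lim: "((\<lambda>w. a (w *\<^sub>R \<theta>) / w) \<longlongrightarrow> as \<theta>) at_top" if \<theta>: "\<theta> \<in> sphere 0 1" for \<theta>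
  proof (rule tendstoI)
    fix \<epsilon> :: real
    assume "\<epsilon> > 0"
    then obtain W where "\<forall>w\<ge>W. \<forall>\<theta>\<in>sphere 0 1. \<bar>a (w *\<^sub>R \<theta>) / w - as \<theta>\<bar> < \<epsilon>"
      using lim by blast
    with \<theta> show "\<forall>\<^sub>F w in at_top. dist (a (w *\<^sub>R \<theta>) / w) (as \<theta>) < \<epsilon>"
      unfolding dist_real_def eventually_at_top_linorder by blast
  qed
  fix x :: 'a
  show "(\<lambda>i. a (real (Suc i) *\<^sub>R (x /\<^sub>R norm x)) / real (Suc i) * norm x) \<longlonglongrightarrow> star as x"
  proof (cases "x = 0")
    case True
    then show ?thesis by (simp add: star_def)
  next
    case False
    then have "x /\<^sub>R norm x \<in> sphere 0 1" by simp
    from LIMSEQ_Suc[OF filterlim_compose[OF radial_lim[OF this] filterlim_real_sequentially]]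
    show ?thesis unfolding star_def by (intro tendsto_mult_right) simp
  qed
qed (use a in measurable)

lemma borel_measurable_cstep:
  assumes "star as \<in> borel_measurable borel" and "star bs \<in> borel_measurable borel"
    and X: "X \<in> borel_measurable M" and "U \<in> borel_measurable M"
  shows "(\<lambda>e. cstep as bs (X e :: real^'p::{finite,linorder}) (U e)) \<in> borel_measurable M"
proof -
  note [measurable] = assms
  have "(\<lambda>e. zfun as bs (X e) (U e)) \<in> borel_measurable M"
    unfolding zfun_def by measurable
  from borel_measurable_continuous_Pair[OF this X continuous_on_prepend]
  show ?thesis unfolding cstep_def wfun_def by measurable
qed

lemma borel_measurable_cchain:
  assumes "star as \<in> borel_measurable borel" and "star bs \<in> borel_measurable borel" and "m \<le> t"
  shows "(\<lambda>e. cchain as bs (\<theta>::real^'p::{finite,linorder}) e m)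
    \<in> borel_measurable (PiM {1..t} (\<lambda>_. density lborel g))"
  using \<open>m \<le> t\<close>
proof (induction m)
  case 0
  then show ?case by simp
next
  case (Suc m)
  have "(\<lambda>e. e (Suc m)) \<in> measurable (PiM {1..t} (\<lambda>_. density lborel g)) (density lborel g)"
    using Suc.prems by (intro measurable_component_singleton) auto
  then have "(\<lambda>e. e (Suc m)) \<in> borel_measurable (PiM {1..t} (\<lambda>_. density lborel g))"
    by (simp cong: measurable_cong_sets)
  with Suc show ?case by (simp add: borel_measurable_cstep assms)
qed

lemma continuous_on_cshift_pow: "continuous_on UNIV (cshift ^^ k :: real^'p::{finite,linorder} \<Rightarrow> _)"
proof -
  have "(cshift ^^ k) = (\<lambda>x::real^('p::{finite,linorder}). \<chi> i. x $ idx ((pos i + k) mod CARD('p)))"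
    by (simp add: fun_eq_iff vec_eq_iff cshift_pow_nth)
  then show ?thesis by (simp add: continuous_on_vec_lambda continuous_on_component)
qed

lemma sets_Theta_ss: "countable N \<Longrightarrow> Theta_ss N \<in> sets (borel :: (real^'p::{finite,linorder}) measure)"
proof -
  assume N: "countable N"
  have "Theta_ss N = sphere 0 1 \<inter> (\<Inter>i. {x. x $ i \<noteq> 0}) \<inter>
      (\<Inter>n\<in>N. \<Inter>k. {x::real^('p::{finite,linorder}). n \<bullet> (cshift ^^ k) x \<noteq> 0})"
    by (auto simp: mem_Theta_ss_iff)
  also have "\<dots> \<in> sets borel"
    by (intro sets.Int sets.countable_INT'' N borel_closed borel_open open_Collect_neq
        continuous_intros continuous_on_cshift_pow continuous_on_component) auto
  finally show ?thesis .
qed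

lemma cchain_cong:
  "(\<And>i. 1 \<le> i \<Longrightarrow> i \<le> m \<Longrightarrow> e i = e' i) \<Longrightarrow> cchain as bs \<theta> e m = cchain as bs \<theta> e' m"
  by (induction m) auto

lemma AE_PiM_insert:
  assumes "product_sigma_finite M" and "finite I" and "i \<notin> I"
    and [measurable]: "Measurable.pred (PiM (insert i I) M) P"
    and ae: "AE x in PiM I M. AE y in M i. P (x(i := y))"
  shows "AE x in PiM (insert i I) M. P x"
proof -
  interpret product_sigma_finite M by fact
  have "(\<integral>\<^sup>+x. indicator {x. \<not> P x} x \<partial>PiM (insert i I) M) =
      (\<integral>\<^sup>+x. \<integral>\<^sup>+y. indicator {x. \<not> P x} (x(i := y)) \<partial>M i \<partial>PiM I M)"
    using assms(2,3) by (rule product_nn_integral_insert) measurable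
  also have "\<dots> = (\<integral>\<^sup>+x. 0 \<partial>PiM I M)"
  proof (intro nn_integral_cong_AE, rule eventually_mono[OF ae])
    fix x
    assume "AE y in M i. P (x(i := y))"
    then have "AE y in M i. indicator {x. \<not> P x} (x(i := y)) = (0::ennreal)"
      by (rule eventually_mono) simp
    then show "(\<integral>\<^sup>+y. indicator {x. \<not> P x} (x(i := y)) \<partial>M i) = 0"
      by (simp add: nn_integral_cong_AE)
  qed
  finally show ?thesis by (simp add: AE_iff_nn_integral)
qed

lemma AE_cchain_in_Theta_ss:
  fixes \<theta> :: "real^'p::{finite,linorder}"
  assumes p: "CARD('p) > 1" and \<theta>: "\<theta> \<in> Theta_ss N" and N: "finite N"
    and b: "\<forall>s\<in>Theta_ss N. star bs s \<noteq> 0"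
    and g: "g \<in> borel_measurable lborel" and \<sigma>: "sigma_finite_measure (density lborel g)"
    and sa: "star as \<in> borel_measurable borel" and sb: "star bs \<in> borel_measurable borel"
  shows "AE e in PiM {1..t} (\<lambda>_. density lborel g). \<forall>j\<le>t. cchain as bs \<theta> e j \<in> Theta_ss N"
proof (induction t)
  case 0
  then show ?case using \<theta> by simp
next
  case (Suc t)
  have ins: "{1..Suc t} = insert (Suc t) {1..t}" by auto
  have pred_j: "Measurable.pred (PiM {1..Suc t} (\<lambda>_. density lborel g))
      (\<lambda>e. cchain as bs \<theta> e j \<in> Theta_ss N)" if "j \<le> Suc t" for j
    using that by (intro pred_sets2[OF sets_Theta_ss] borel_measurable_cchain sa sb countable_finite N)
  then have pred: "Measurable.pred (PiM {1..Suc t} (\<lambda>_. density lborel g))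
      (\<lambda>e. \<forall>j\<le>Suc t. cchain as bs \<theta> e j \<in> Theta_ss N)"
    by (intro pred_intros_countable pred_intros_imp' pred_j)
  have step: "AE y in density lborel g. \<forall>j\<le>Suc t. cchain as bs \<theta> (x(Suc t := y)) j \<in> Theta_ss N"
    if x: "\<forall>j\<le>t. cchain as bs \<theta> x j \<in> Theta_ss N" for x
  proof -
    have prefix: "cchain as bs \<theta> (x(Suc t := y)) j = cchain as bs \<theta> x j" if "j \<le> t" for j y
      using that by (intro cchain_cong) auto
    have "cchain as bs \<theta> x t \<in> Theta_ss N" using x by simp
    with p N b g have "AE y in density lborel g. cstep as bs (cchain as bs \<theta> x t) y \<in> Theta_ss N"
      by (intro AE_cstep_in_Theta_ss) auto
    then show ?thesis
      by (rule eventually_mono) (use x prefix in \<open>auto simp: le_Suc_eq\<close>)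
  qed
  have ps: "product_sigma_finite (\<lambda>_::nat. density lborel g)"
    using \<sigma> by (simp add: product_sigma_finite_def)
  have ae: "AE x in PiM {1..t} (\<lambda>_. density lborel g).
      AE y in density lborel g. \<forall>j\<le>Suc t. cchain as bs \<theta> (x(Suc t := y)) j \<in> Theta_ss N"
    using Suc.IH by (rule eventually_mono) (rule step)
  show ?case
    unfolding ins by (rule AE_PiM_insert[OF ps _ _ pred[unfolded ins] ae]) auto
qed

section \<open>Continuity of the collapsed chain\<close>

lemma isCont_off_hyperplanes:
  fixes g :: "real^'p::{finite,linorder} \<Rightarrow> real"
  assumes g: "continuous_on (UNIV - (\<Union>n\<in>N. {x. n \<bullet> x = 0})) g"
    and N: "finite N" and s: "s \<in> Theta_ss N"
  shows "isCont g s"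
proof -
  have "open (UNIV - (\<Union>n\<in>N. {x::real^('p::{finite,linorder}). n \<bullet> x = 0}))"
    using N by (intro open_Diff open_UNIV closed_UN) (auto simp: closed_hyperplane)
  moreover have "n \<bullet> s \<noteq> 0" if "n \<in> N" for n
    using s that funpow_0[of cshift s] unfolding mem_Theta_ss_iff by metis
  then have "s \<in> UNIV - (\<Union>n\<in>N. {x. n \<bullet> x = 0})" by blast
  ultimately show ?thesis using g continuous_on_eq_continuous_at by blast
qed

lemma isCont_cstep:
  fixes s :: "real^'p::{finite,linorder}"
  assumes "isCont (star as) s" and "isCont (star bs) s"
    and nonzero: "prepend (zfun as bs s u) s \<noteq> 0"
  shows "isCont (\<lambda>x. cstep as bs x u) s"
proof -
  have inner: "isCont (\<lambda>x. (zfun as bs x u, x)) s"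
    unfolding zfun_def using assms by (intro continuous_intros) auto
  have outer: "isCont (\<lambda>x. prepend (fst x) (snd x :: real^('p::{finite,linorder}))) (zfun as bs s u, s)"
    using continuous_on_prepend continuous_on_eq_continuous_at open_UNIV by blast
  from isCont_o2[OF inner outer] have "isCont (\<lambda>x. prepend (zfun as bs x u) x) s"
    by simp
  with nonzero show ?thesis
    unfolding cstep_eq by (intro continuous_intros) auto
qed

lemma isCont_cchain:
  fixes \<theta> :: "real^'p::{finite,linorder}"
  assumes p: "CARD('p) > 1" and N: "finite N"
    and ca: "continuous_on (UNIV - (\<Union>n\<in>N. {x. n \<bullet> x = 0})) (star as)"
    and cb: "continuous_on (UNIV - (\<Union>n\<in>N. {x. n \<bullet> x = 0})) (star bs)"
    and path: "\<forall>j<m. cchain as bs \<theta> e j \<in> Theta_ss N"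
  shows "isCont (\<lambda>\<theta>'. cchain as bs \<theta>' e m) \<theta>"
  using path
proof (induction m)
  case 0
  then show ?case by simp
next
  case (Suc m)
  let ?s = "cchain as bs \<theta> e m"
  have s: "?s \<in> Theta_ss N" using Suc.prems by simp
  then have "prepend (zfun as bs ?s (e (Suc m))) ?s \<noteq> 0"
    using prepend_nonzero[OF p] unfolding mem_Theta_ss_iff by blast
  with s have "isCont (\<lambda>x. cstep as bs x (e (Suc m))) ?s"
    by (intro isCont_cstep isCont_off_hyperplanes[OF _ N] ca cb)
  moreover have "isCont (\<lambda>\<theta>'. cchain as bs \<theta>' e m) \<theta>" using Suc by simp
  ultimately show ?case using isCont_o2 by simp
qed

lemma finite_sphere_card_1:
  assumes "CARD('p::finite) = 1"
  shows "finite (sphere 0 r :: (real^'p) set)"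
proof -
  obtain i0 :: 'p where U: "UNIV = {i0}" using assms card_1_singletonE by blast
  have "x \<in> (\<lambda>c. \<chi> _. c) ` {-r, r}" if "x \<in> sphere 0 r" for x :: "real^'p"
  proof (rule image_eqI)
    show "x = (\<chi> _. x $ i0)"
    proof (subst vec_eq_iff, intro allI)
      fix i :: 'p
      have "i = i0" using U by blast
      then show "x $ i = (\<chi> _. x $ i0) $ i" by simp
    qed
    have "norm x = \<bar>x $ i0\<bar>" by (simp add: norm_vec_def L2_set_def U)
    with that show "x $ i0 \<in> {-r, r}" by (auto simp: abs_if split: if_splits)
  qed
  then show ?thesis by (meson finite_imageI finite.emptyI finite_insert finite_subset subsetI)
qed

lemma loc_bdd_away0_nonzero: "loc_bdd_away0 S g \<Longrightarrow> x \<in> S \<Longrightarrow> g x \<noteq> 0"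
  unfolding loc_bdd_away0_def by (metis IntI abs_zero centre_in_ball not_le)

lemma continuous_on_Theta_ss_expectation_cchain:
  fixes as bs q :: "real^'p::{finite,linorder} \<Rightarrow> real"
  assumes p: "CARD('p) > 1" and N: "finite N"
    and ca: "continuous_on (UNIV - (\<Union>n\<in>N. {x. n \<bullet> x = 0})) (star as)"
    and cb: "continuous_on (UNIV - (\<Union>n\<in>N. {x. n \<bullet> x = 0})) (star bs)"
    and sa: "star as \<in> borel_measurable borel" and sb: "star bs \<in> borel_measurable borel"
    and b: "\<forall>s\<in>Theta_ss N. star bs s \<noteq> 0"
    and g: "g \<in> borel_measurable lborel" and prob: "prob_space (density lborel g)"
    and q_meas: "q \<in> borel_measurable borel" and q_bdd: "\<forall>\<theta>\<in>Theta_ss N. \<bar>q \<theta>\<bar> \<le> B"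
    and q_cont: "continuous_on (Theta_ss N) q"
  shows "continuous_on (Theta_ss N)
    (\<lambda>\<theta>. \<integral>e. q (cchain as bs \<theta> e t) \<partial>PiM {1..t} (\<lambda>_. density lborel g))"
proof (rule continuous_on_sequentiallyI)
  let ?P = "PiM {1..t} (\<lambda>_. density lborel g)"
  interpret P: prob_space ?P using prob by (intro prob_space_PiM) auto
  have meas: "(\<lambda>e. q (cchain as bs \<theta> e t)) \<in> borel_measurable ?P" for \<theta>
    using measurable_compose[OF borel_measurable_cchain[OF sa sb order.refl] q_meas] by simp
  have path: "AE e in ?P. \<forall>j\<le>t. cchain as bs \<theta> e j \<in> Theta_ss N" if "\<theta> \<in> Theta_ss N" for \<theta>
    using prob_space_imp_sigma_finite[OF prob]
    by (intro AE_cchain_in_Theta_ss[OF p that N b g _ sa sb])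
  fix x \<theta>
  assume x: "\<forall>n. x n \<in> Theta_ss N" and \<theta>: "\<theta> \<in> Theta_ss N" and lim: "x \<longlonglongrightarrow> \<theta>"
  show "(\<lambda>n. \<integral>e. q (cchain as bs (x n) e t) \<partial>?P) \<longlonglongrightarrow> (\<integral>e. q (cchain as bs \<theta> e t) \<partial>?P)"
  proof (rule integral_dominated_convergence[where w = "\<lambda>_. B"])
    show "AE e in ?P. norm (q (cchain as bs (x n) e t)) \<le> B" for n
      using path[OF x[rule_format, of n]] by (rule eventually_mono) (simp add: q_bdd)
    have "AE e in ?P. (\<forall>j\<le>t. cchain as bs \<theta> e j \<in> Theta_ss N) \<and>
        (\<forall>n. \<forall>j\<le>t. cchain as bs (x n) e j \<in> Theta_ss N)"
      using path[OF \<theta>] path[OF x[rule_format]] by (simp add: AE_all_countable)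
    then show "AE e in ?P. (\<lambda>n. q (cchain as bs (x n) e t)) \<longlonglongrightarrow> q (cchain as bs \<theta> e t)"
    proof (rule eventually_mono, elim conjE)
      fix e
      assume "\<forall>j\<le>t. cchain as bs \<theta> e j \<in> Theta_ss N"
        and "\<forall>n. \<forall>j\<le>t. cchain as bs (x n) e j \<in> Theta_ss N"
      moreover from this(1) have "isCont (\<lambda>\<theta>'. cchain as bs \<theta>' e t) \<theta>"
        by (intro isCont_cchain[OF p N ca cb]) auto
      then have "(\<lambda>n. cchain as bs (x n) e t) \<longlonglongrightarrow> cchain as bs \<theta> e t"
        using isCont_tendsto_compose lim by blast
      ultimately show "(\<lambda>n. q (cchain as bs (x n) e t)) \<longlonglongrightarrow> q (cchain as bs \<theta> e t)"
        by (intro continuous_on_tendsto_compose[OF q_cont]) auto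
    qed
  qed (simp_all only: meas P.integrable_const)
qed

theorem lemma5p5:
  fixes a b :: "real^('p::{finite,linorder}) \<Rightarrow> real"
    and f :: "real \<Rightarrow> real"
    and as bs :: "real^('p::{finite,linorder}) \<Rightarrow> real"
    and N :: "(real^('p::{finite,linorder})) set"
    and q :: "real^('p::{finite,linorder}) \<Rightarrow> real"
    and t :: nat
  assumes a_meas: "a \<in> borel_measurable borel" and b_meas: "b \<in> borel_measurable borel"
    and f_meas: "f \<in> borel_measurable lborel" and f_nonneg: "\<forall>u. 0 \<le> f u"
    and f_int: "(\<integral>\<^sup>+u. ennreal (f u) \<partial>lborel) = 1"
    and A1_f: "loc_bdd_away0 UNIV f"
    and A1_b: "\<forall>x. 0 < b x" "loc_bdd b" "loc_bdd_away0 UNIV b"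
    and A2_f: "\<exists>M. \<forall>u. (1 + \<bar>u\<bar>) * f u \<le> M"
    and A2_mom: "\<exists>r0>0. (\<integral>\<^sup>+u. ennreal (\<bar>u\<bar> powr r0 * f u) \<partial>lborel) < \<infinity>"
    and A3: "\<exists>M. \<forall>x. \<bar>a x\<bar> / (1 + norm x) \<le> M" "\<exists>M. \<forall>x. \<bar>b x\<bar> / (1 + norm x) \<le> M"
    and A4_bdd: "\<exists>M. \<forall>\<theta>\<in>sphere 0 1. \<bar>as \<theta>\<bar> \<le> M" "\<exists>M. \<forall>\<theta>\<in>sphere 0 1. \<bar>bs \<theta>\<bar> \<le> M"
    and A4_lim: "\<forall>\<epsilon>>0. \<exists>W. \<forall>w\<ge>W. \<forall>\<theta>\<in>sphere 0 1. \<bar>a (w *\<^sub>R \<theta>) / w - as \<theta>\<bar> < \<epsilon>"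
                "\<forall>\<epsilon>>0. \<exists>W. \<forall>w\<ge>W. \<forall>\<theta>\<in>sphere 0 1. \<bar>b (w *\<^sub>R \<theta>) / w - bs \<theta>\<bar> < \<epsilon>"
    and A5: "CARD('p) > 1 \<longrightarrow> loc_bdd_away0 (UNIV - {0}) (\<lambda>x. max \<bar>star as x\<bar> (star bs x))"
            "CARD('p) > 1 \<longrightarrow> loc_bdd_away0 (UNIV - H0) (star bs)"
    and A6: "finite N" "0 \<notin> N"
            "CARD('p) > 1 \<longrightarrow> continuous_on (UNIV - (\<Union>n\<in>N. {x. n \<bullet> x = 0})) (star as)"
            "CARD('p) > 1 \<longrightarrow> continuous_on (UNIV - (\<Union>n\<in>N. {x. n \<bullet> x = 0})) (star bs)"
    and q_meas: "q \<in> borel_measurable borel"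
    and q_bdd: "\<exists>M. \<forall>\<theta>\<in>sphere 0 1. \<bar>q \<theta>\<bar> \<le> M"
    and q_cont: "continuous_on (Theta_ss N) q"
    and t: "t \<ge> 1"
  shows "continuous_on (Theta_ss N)
           (\<lambda>\<theta>. \<integral>e. q (cchain as bs \<theta> e t) \<partial>(PiM {1..t} (\<lambda>_. density lborel f)))"
proof (cases "CARD('p) > 1")
  \<comment> \<open>Only A.4 (for measurability of a^*, b^*), the second half of A.5 and A.6 are used;
     the conclusion also holds for t = 0.\<close>
  case False
  moreover have "CARD('p) > 0" by simp
  ultimately have "CARD('p) = 1" by linarith
  then have "finite (sphere 0 1 :: (real^('p::{finite,linorder})) set)" by (rule finite_sphere_card_1)
  then have "finite (Theta_ss N)" by (rule finite_subset[rotated]) (auto simp: mem_Theta_ss_iff)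
  then show ?thesis by (rule continuous_on_finite)
next
  case p: True
  obtain B where "\<forall>\<theta>\<in>sphere 0 1. \<bar>q \<theta>\<bar> \<le> B" using q_bdd by blast
  then have q_bdd': "\<forall>\<theta>\<in>Theta_ss N. \<bar>q \<theta>\<bar> \<le> B" by (simp add: mem_Theta_ss_iff)
  have b: "\<forall>s\<in>Theta_ss N. star bs s \<noteq> 0"
  proof
    fix s
    assume "s \<in> Theta_ss N"
    then have "s \<in> UNIV - H0" by (simp add: Theta_ss_def Theta_sharp_def)
    with A5(2) p show "star bs s \<noteq> 0" by (simp add: loc_bdd_away0_nonzero)
  qed
  have g: "(\<lambda>u. ennreal (f u)) \<in> borel_measurable lborel" using f_meas by simp
  have prob: "prob_space (density lborel (\<lambda>u. ennreal (f u)))"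
    using f_int g by (intro prob_spaceI) (simp add: emeasure_density)
  show ?thesis
    using A6(3,4) p
    by (intro continuous_on_Theta_ss_expectation_cchain[OF p A6(1) _ _ _ _ b g prob q_meas q_bdd' q_cont]
        borel_measurable_star[OF a_meas A4_lim(1)] borel_measurable_star[OF b_meas A4_lim(2)]) auto
qed

end
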